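(* Let $s,t\in\mathbb{R}$ with $s\ne0$, $s^2+4t>0$, and suppose $q=\varphi'_{s,t}/\varphi_{s,t}$ satisfies $0<\lvert q\rvert<1$. Let $a,b$ be real numbers, and let $f$ be a function defined on a set containing the points $aq^n,bq^n$ ($n\ge0$), with values in $\mathbb{R}$ or $\mathbb{C}$, such that $\mathbf{D}_{s,t}f\in\mathcal{L}^1_{s,t}[a,b]$. Then: (1) $\displaystyle\int_a^b(\mathbf{D}_{s,t}f)(x)\,d_{s,t}x=\Big[f(b)-\lim_{n\to\infty}f(bq^n)\Big]-\Big[f(a)-\lim_{n\to\infty}f(aq^n)\Big]$, provided these limits exist; (2) if in addition $f$ is continuous at $0$, then $\int_a^b(\mathbf{D}_{s,t}f)(x)\,d_{s,t}x=f(b)-f(a)$.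
   Context: $\varphi_{s,t}=\frac{s+\sqrt{s^2+4t}}{2}$, $\varphi'_{s,t}=\frac{s-\sqrt{s^2+4t}}{2}$. The $(s,t)$-derivative is $(\mathbf{D}_{s,t}f)(x)=\frac{f(\varphi_{s,t}x)-f(\varphi'_{s,t}x)}{(\varphi_{s,t}-\varphi'_{s,t})x}$ for $x\ne0$ and $(\mathbf{D}_{s,t}f)(0)=f'(0)$. For $0<\lvert q\rvert<1$, the $(s,t)$-integral is $\int_a^b g(x)\,d_{s,t}x=(1-q)\sum_{n=0}^\infty\big[bg(bq^n/\varphi_{s,t})-ag(aq^n/\varphi_{s,t})\big]q^n$. $\mathcal{L}^1_{s,t}[a,b]$ is the set of functions $g$ such that $\lvert g\rvert$ is $(s,t)$-integrable on $[a,b]$, i.e. $\int_a^b\lvert g\rvert\,d_{s,t}x<\infty$ (the defining series converges). *)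

theory Defs
  imports "HOL-Analysis.Analysis"
begin

definition st_phi :: "real \<Rightarrow> real \<Rightarrow> real" where
  "st_phi s t = (s + sqrt (s^2 + 4*t)) / 2"

definition st_phi' :: "real \<Rightarrow> real \<Rightarrow> real" where
  "st_phi' s t = (s - sqrt (s^2 + 4*t)) / 2"

definition st_q :: "real \<Rightarrow> real \<Rightarrow> real" where
  "st_q s t = st_phi' s t / st_phi s t"

text \<open>The (s,t)-derivative; functions take real arguments and values in a real normed
  field (covering both real- and complex-valued functions).\<close>
definition st_D :: "real \<Rightarrow> real \<Rightarrow> (real \<Rightarrow> 'a::real_normed_field) \<Rightarrow> real \<Rightarrow> 'a" where
  "st_D s t f x =
     (if x = 0 then vector_derivative f (at 0)
      else (1 / ((st_phi s t - st_phi' s t) * x)) *\<^sub>R (f (st_phi s t * x) - f (st_phi' s t * x)))"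

definition st_integral :: "real \<Rightarrow> real \<Rightarrow> (real \<Rightarrow> 'a::real_normed_vector) \<Rightarrow> real \<Rightarrow> real \<Rightarrow> 'a" where
  "st_integral s t g a b =
     (1 - st_q s t) *\<^sub>R
       (\<Sum>n. (st_q s t ^ n) *\<^sub>R
              (b *\<^sub>R g (b * st_q s t ^ n / st_phi s t) - a *\<^sub>R g (a * st_q s t ^ n / st_phi s t)))"

definition st_L1 :: "real \<Rightarrow> real \<Rightarrow> real \<Rightarrow> real \<Rightarrow> (real \<Rightarrow> 'a::real_normed_vector) \<Rightarrow> bool" where
  "st_L1 s t a b g \<longleftrightarrow>
     summable (\<lambda>n. (1 - st_q s t) * (st_q s t ^ n) *
              (b * norm (g (b * st_q s t ^ n / st_phi s t)) - a * norm (g (a * st_q s t ^ n / st_phi s t))))"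

end

theory Submission
  imports Defs
begin

text \<open>Since \<open>q = \<phi>'/\<phi>\<close>, at the point \<open>x = c q^n/\<phi>\<close> the \<open>(s,t)\<close>-derivative samples
  \<open>f\<close> at \<open>\<phi> x = c q^n\<close> and \<open>\<phi>' x = c q^(n+1)\<close>, and its denominator is \<open>(\<phi> - \<phi>') x = (1 - q) q^n c\<close>.
  So the \<open>n\<close>-th term of the \<open>(s,t)\<close>-integral of \<open>D f\<close> is exactly \<open>f (c q^n) - f (c q^(n+1))\<close>:
  the series telescopes to \<open>f c - lim f (c q^n)\<close>, and this limit is \<open>f 0\<close> when \<open>f\<close> is
  continuous at \<open>0\<close>.\<close>

lemma st_q_neq_1:
  assumes "st_q s t \<noteq> 0" and "st_phi s t \<noteq> st_phi' s t"
  shows "st_q s t \<noteq> 1"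
  using assms by (auto simp: st_q_def)

lemma scaled_st_D_at_geometric_point:
  fixes f :: "real \<Rightarrow> 'a::real_normed_field"
  assumes q0: "st_q s t \<noteq> 0" and phi_neq: "st_phi s t \<noteq> st_phi' s t"
  shows "((1 - st_q s t) * st_q s t ^ n * c) *\<^sub>R st_D s t f (c * st_q s t ^ n / st_phi s t)
         = f (c * st_q s t ^ n) - f (c * st_q s t ^ Suc n)"
proof (cases "c = 0")
  case True
  then show ?thesis by simp
next
  case c0: False
  define p p' q where "p = st_phi s t" and "p' = st_phi' s t" and "q = st_q s t"
  have p0: "p \<noteq> 0" and "p \<noteq> p'" and "q \<noteq> 0" and q_eq: "q = p' / p"
    using q0 phi_neq by (auto simp: p_def p'_def q_def st_q_def)
  define x where "x = c * q ^ n / p"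
  have "x \<noteq> 0" and "p * x = c * q ^ n" and "p' * x = c * q ^ Suc n"
    using c0 p0 \<open>q \<noteq> 0\<close> by (simp_all add: x_def q_eq field_simps)
  then have "st_D s t f x = (1 / ((p - p') * x)) *\<^sub>R (f (c * q ^ n) - f (c * q ^ Suc n))"
    by (simp add: st_D_def p_def p'_def)
  moreover have "(1 - q) * q ^ n * c * (1 / ((p - p') * x)) = 1"
    using c0 p0 \<open>p \<noteq> p'\<close> \<open>q \<noteq> 0\<close> by (simp add: x_def q_eq field_simps)
  ultimately show ?thesis
    by (simp add: x_def flip: p_def q_def)
qed

lemma st_D_at_geometric_points_sums:
  fixes f :: "real \<Rightarrow> 'a::real_normed_field"
  assumes q0: "st_q s t \<noteq> 0" and phi_neq: "st_phi s t \<noteq> st_phi' s t"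
    and lim: "(\<lambda>n. f (c * st_q s t ^ n)) \<longlonglongrightarrow> L"
  shows "(\<lambda>n. st_q s t ^ n *\<^sub>R (c *\<^sub>R st_D s t f (c * st_q s t ^ n / st_phi s t)))
           sums ((1 / (1 - st_q s t)) *\<^sub>R (f c - L))"
proof -
  have "(\<lambda>n. f (c * st_q s t ^ n) - f (c * st_q s t ^ Suc n)) sums (f c - L)"
    using telescope_sums'[OF lim] by simp
  then have "(\<lambda>n. (1 / (1 - st_q s t)) *\<^sub>R (f (c * st_q s t ^ n) - f (c * st_q s t ^ Suc n)))
               sums ((1 / (1 - st_q s t)) *\<^sub>R (f c - L))"
    by (rule sums_scaleR_right)
  moreover have "(1 / (1 - st_q s t)) *\<^sub>R (f (c * st_q s t ^ n) - f (c * st_q s t ^ Suc n))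
                 = st_q s t ^ n *\<^sub>R (c *\<^sub>R st_D s t f (c * st_q s t ^ n / st_phi s t))" for n
  proof -
    have "(1 / (1 - st_q s t)) *\<^sub>R (f (c * st_q s t ^ n) - f (c * st_q s t ^ Suc n))
          = (1 / (1 - st_q s t)) *\<^sub>R
              (((1 - st_q s t) * st_q s t ^ n * c) *\<^sub>R st_D s t f (c * st_q s t ^ n / st_phi s t))"
      by (simp only: scaled_st_D_at_geometric_point[OF q0 phi_neq])
    then show ?thesis
      using st_q_neq_1[OF q0 phi_neq] by simp
  qed
  ultimately show ?thesis by simp
qed

lemma st_integral_st_D:
  fixes f :: "real \<Rightarrow> 'a::real_normed_field"
  assumes q0: "st_q s t \<noteq> 0" and phi_neq: "st_phi s t \<noteq> st_phi' s t"
    and lim_b: "(\<lambda>n. f (b * st_q s t ^ n)) \<longlonglongrightarrow> Lb"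
    and lim_a: "(\<lambda>n. f (a * st_q s t ^ n)) \<longlonglongrightarrow> La"
  shows "st_integral s t (st_D s t f) a b = (f b - Lb) - (f a - La)"
proof -
  let ?q = "st_q s t"
  have "(\<lambda>n. ?q ^ n *\<^sub>R (b *\<^sub>R st_D s t f (b * ?q ^ n / st_phi s t))
             - ?q ^ n *\<^sub>R (a *\<^sub>R st_D s t f (a * ?q ^ n / st_phi s t)))
          sums ((1 / (1 - ?q)) *\<^sub>R (f b - Lb) - (1 / (1 - ?q)) *\<^sub>R (f a - La))"
    by (intro sums_diff st_D_at_geometric_points_sums q0 phi_neq lim_a lim_b)
  then have "(\<lambda>n. ?q ^ n *\<^sub>R (b *\<^sub>R st_D s t f (b * ?q ^ n / st_phi s t)
                             - a *\<^sub>R st_D s t f (a * ?q ^ n / st_phi s t)))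
               sums ((1 / (1 - ?q)) *\<^sub>R ((f b - Lb) - (f a - La)))"
    by (simp add: scaleR_diff_right)
  then show ?thesis
    using st_q_neq_1[OF q0 phi_neq] by (simp add: st_integral_def sums_iff)
qed

lemma isCont_0_imp_LIMSEQ_geometric:
  fixes f :: "real \<Rightarrow> 'a::topological_space" and q :: real
  assumes "isCont f 0" and "\<bar>q\<bar> < 1"
  shows "(\<lambda>n. f (c * q ^ n)) \<longlonglongrightarrow> f 0"
proof -
  have "(\<lambda>n. c * q ^ n) \<longlonglongrightarrow> 0"
    by (intro tendsto_mult_right_zero LIMSEQ_power_zero) (use assms(2) in simp)
  then show ?thesis
    using isCont_tendsto_compose[OF assms(1)] by blast
qed

theorem mainTheorem6:
  fixes s t a b :: real and f :: "real \<Rightarrow> 'a::real_normed_field"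
  assumes "s \<noteq> 0" and "s^2 + 4*t > 0"
    and "0 < \<bar>st_q s t\<bar>" and "\<bar>st_q s t\<bar> < 1"
    and "st_L1 s t a b (st_D s t f)"
  shows "(\<forall>Lb La. (\<lambda>n. f (b * st_q s t ^ n)) \<longlonglongrightarrow> Lb \<longrightarrow>
                  (\<lambda>n. f (a * st_q s t ^ n)) \<longlonglongrightarrow> La \<longrightarrow>
                  st_integral s t (st_D s t f) a b = (f b - Lb) - (f a - La))
       \<and> (isCont f 0 \<longrightarrow> st_integral s t (st_D s t f) a b = f b - f a)"
proof -
  have q0: "st_q s t \<noteq> 0" using assms(3) by simp
  have phi_neq: "st_phi s t \<noteq> st_phi' s t"
    using assms(2) by (simp add: st_phi_def st_phi'_def)
  show ?thesis
    using st_integral_st_D[OF q0 phi_neq]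
      isCont_0_imp_LIMSEQ_geometric[OF _ assms(4), of f a]
      isCont_0_imp_LIMSEQ_geometric[OF _ assms(4), of f b]
    by fastforce
qed

end
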